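(* Let $\phi:\mathbb{N}_0\to\mathbb{N}_0$ satisfy $\phi(0)=0$ and $\phi(x)\neq x$ for all $x\in\mathbb{N}$. If $\phi$ has a cycle (i.e. there exist $m\ge2$ and $x\in\mathbb{N}$ with $\phi^m(x)=x$), then there exists an integer $N\ge2$ such that $\det\widehat{M}_n(\phi)=0$ for all $n\ge N$.
   Context: $\mathbb{N}=\{1,2,\dots\}$, $\mathbb{N}_0=\mathbb{N}\cup\{0\}$, $D_n=\{1,\dots,n\}$, $D_{n,0}=D_n\cup\{0\}$. The local function $\phi_n:D_{n,0}\to D_{n,0}$ is $\phi_n(x)=\phi(x)$ if $x\in D_n$ and $\phi(x)\in D_n$, and $\phi_n(x)=0$ otherwise. For $1\le i\le n$, $\mathbf{e}_i$ is the $i$-th unit vector in $\mathbb{Z}^n$ and $\mathbf{e}_0$ is the zero vector. $M_n(\phi)$ is the $n\times n$ matrix whose $j$-th column is $\mathbf{e}_{\phi_n(j)}$ ($1\le j\le n$), and $\widehat{M}_n(\phi)=I-M_n(\phi)$. *)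

theory Defs
  imports Main "Jordan_Normal_Form.Determinant"
begin

definition local_fun :: "nat \<Rightarrow> (nat \<Rightarrow> nat) \<Rightarrow> nat \<Rightarrow> nat" where
  "local_fun n \<phi> x = (if x \<in> {1..n} \<and> \<phi> x \<in> {1..n} then \<phi> x else 0)"

text \<open>M_n(phi): the j-th column (1-based) is e_{phi_n(j)}, with e_0 the zero vector.
  Jordan_Normal_Form matrices are 0-indexed, so entry (i,j) corresponds to row i+1, column j+1.\<close>
definition M_mat :: "nat \<Rightarrow> (nat \<Rightarrow> nat) \<Rightarrow> int mat" where
  "M_mat n \<phi> = mat n n (\<lambda>(i, j). if local_fun n \<phi> (j + 1) = i + 1 then 1 else 0)"

definition Mhat_mat :: "nat \<Rightarrow> (nat \<Rightarrow> nat) \<Rightarrow> int mat" where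
  "Mhat_mat n \<phi> = 1\<^sub>m n - M_mat n \<phi>"

end

theory Submission
  imports Defs "HOL-Combinatorics.Orbits"
begin

text \<open>A periodic point x \<ge> 1 of \<phi> has a finite orbit C of positive integers which \<phi> maps
  bijectively onto itself (it avoids 0 because 0 is a fixed point). As soon as C \<subseteq> {1..n},
  each column j \<in> C of M_n(\<phi>) is the unit vector of \<phi> j \<in> C, so the indicator vector of C is
  fixed by M_n(\<phi>) and is a nonzero kernel vector of I - M_n(\<phi>).\<close>

lemma M_mat_carrier [simp]: "M_mat n \<phi> \<in> carrier_mat n n"
  by (simp add: M_mat_def)

lemma Mhat_mat_carrier [simp]: "Mhat_mat n \<phi> \<in> carrier_mat n n"
  by (auto simp: Mhat_mat_def M_mat_def)

lemma M_mat_mult_vec_nth: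
  assumes "i < n" and "v \<in> carrier_vec n"
  shows "(M_mat n \<phi> *\<^sub>v v) $ i = (\<Sum>j | j < n \<and> local_fun n \<phi> (j + 1) = i + 1. v $ j)"
proof -
  have "(M_mat n \<phi> *\<^sub>v v) $ i = (\<Sum>j<n. (if local_fun n \<phi> (j + 1) = i + 1 then v $ j else 0))"
    using assms by (auto simp: M_mat_def scalar_prod_def lessThan_atLeast0 intro: sum.cong)
  also have "\<dots> = (\<Sum>j | j < n \<and> local_fun n \<phi> (j + 1) = i + 1. v $ j)"
    by (simp add: sum.If_cases Int_def conj_commute)
  finally show ?thesis .
qed

lemma card_fiber_if_image_eq:
  assumes "finite C" and "f ` C = C"
  shows "card {c \<in> C. f c = y} = (if y \<in> C then 1 else 0)"
proof (cases "y \<in> C")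
  case True
  have "inj_on f C"
    using assms by (simp add: eq_card_imp_inj_on)
  moreover obtain c where "c \<in> C" "f c = y"
    using True assms(2) by force
  ultimately have "{c \<in> C. f c = y} = {c}"
    by (auto dest: inj_onD)
  then show ?thesis using True by simp
next
  case False
  then have "{c \<in> C. f c = y} = {}"
    using assms(2) by blast
  then show ?thesis using False by (simp only: card.empty if_False)
qed

definition indicator_vec :: "nat \<Rightarrow> nat set \<Rightarrow> int vec" where
  "indicator_vec n C = vec n (\<lambda>i. if i + 1 \<in> C then 1 else 0)"

lemma M_mat_mult_indicator_vec:
  assumes inv: "\<phi> ` C = C" and sub: "C \<subseteq> {1..n}"
  shows "M_mat n \<phi> *\<^sub>v indicator_vec n C = indicator_vec n C"
proof (rule eq_vecI)
  fix i assume "i < dim_vec (indicator_vec n C)"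
  then have i: "i < n" by (simp add: indicator_vec_def)
  have fin: "finite C"
    using sub finite_subset by blast
  let ?J = "{j. j < n \<and> local_fun n \<phi> (j + 1) = i + 1}"
  have "(M_mat n \<phi> *\<^sub>v indicator_vec n C) $ i = (\<Sum>j\<in>?J. if j + 1 \<in> C then 1 else 0)"
    using i by (simp add: M_mat_mult_vec_nth indicator_vec_def)
  also have "\<dots> = card {j \<in> ?J. j + 1 \<in> C}"
    by (simp add: sum.If_cases Int_def)
  also have "{j \<in> ?J. j + 1 \<in> C} = (\<lambda>c. c - 1) ` {c \<in> C. \<phi> c = i + 1}"
    using inv sub by (force simp: local_fun_def image_iff)
  also have "card \<dots> = card {c \<in> C. \<phi> c = i + 1}"
    using sub by (intro card_image inj_on_diff_nat) auto
  also have "\<dots> = indicator_vec n C $ i"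
    using i card_fiber_if_image_eq[OF fin inv] by (simp add: indicator_vec_def)
  finally show "(M_mat n \<phi> *\<^sub>v indicator_vec n C) $ i = indicator_vec n C $ i" .
qed (simp add: indicator_vec_def M_mat_def)

lemma det_Mhat_mat_eq_0_if_image_eq:
  assumes "\<phi> ` C = C" and "C \<subseteq> {1..n}" and "C \<noteq> {}"
  shows "det (Mhat_mat n \<phi>) = 0"
proof -
  let ?v = "indicator_vec n C"
  have v: "?v \<in> carrier_vec n"
    by (simp add: indicator_vec_def)
  have "Mhat_mat n \<phi> *\<^sub>v ?v = ?v - M_mat n \<phi> *\<^sub>v ?v"
    unfolding Mhat_mat_def using v by (simp add: minus_mult_distrib_mat_vec[of _ n n])
  also have "\<dots> = 0\<^sub>v n"
    using v by (simp add: M_mat_mult_indicator_vec[OF assms(1,2)])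
  finally have "Mhat_mat n \<phi> *\<^sub>v ?v = 0\<^sub>v n" .
  moreover obtain c where "c \<in> C"
    using assms(3) by blast
  with assms(2) have "c \<in> {1..n}"
    by blast
  with \<open>c \<in> C\<close> have "c - 1 < n" and "?v $ (c - 1) = 1"
    by (auto simp: indicator_vec_def)
  then have "?v \<noteq> 0\<^sub>v n"
    by auto
  ultimately show ?thesis
    using v det_0_iff_vec_prod_zero[OF Mhat_mat_carrier] by blast
qed

lemma image_orbit_eq_if_self_in_orbit:
  assumes "x \<in> orbit f x"
  shows "f ` orbit f x = orbit f x"
proof -
  have "f ` orbit f x = orbit f (f x)"
    unfolding orbit_altdef by (force simp: funpow_swap1)
  with assms show ?thesis
    by (simp add: self_in_orbit_step)
qed

lemma fixpoint_in_orbit_eq_if_self_in_orbit: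
  assumes "x \<in> orbit f x" and "z \<in> orbit f x" and "f z = z"
  shows "z = x"
proof -
  have "orbit f z = {z}"
    using assms(3) by (simp add: orbit_eq_singleton_iff)
  then show ?thesis
    using orbit_swap[OF assms(1,2)] by simp
qed

theorem corollary1p4:
  fixes \<phi> :: "nat \<Rightarrow> nat"
  assumes "\<phi> 0 = 0"
    and "\<forall>x\<ge>1. \<phi> x \<noteq> x"
    and "\<exists>m\<ge>2. \<exists>x\<ge>1. (\<phi> ^^ m) x = x"
  shows "\<exists>N::nat\<ge>2. \<forall>n\<ge>N. det (Mhat_mat n \<phi>) = 0"
proof -
  obtain m x where "m \<ge> 2" and "x \<ge> 1" and "(\<phi> ^^ m) x = x"
    using assms(3) by blast
  then have periodic: "x \<in> orbit \<phi> x"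
    by (auto simp: orbit_altdef intro!: exI[of _ m])
  have "0 \<notin> orbit \<phi> x"
    using fixpoint_in_orbit_eq_if_self_in_orbit[OF periodic _ assms(1)] \<open>x \<ge> 1\<close> by auto
  have bounds: "orbit \<phi> x \<subseteq> {1..Max (orbit \<phi> x)}"
  proof
    fix a assume "a \<in> orbit \<phi> x"
    with \<open>0 \<notin> orbit \<phi> x\<close> finite_orbit[OF periodic] show "a \<in> {1..Max (orbit \<phi> x)}"
      by (cases a) auto
  qed
  define N where "N = max 2 (Max (orbit \<phi> x))"
  have "det (Mhat_mat n \<phi>) = 0" if "n \<ge> N" for n
  proof (rule det_Mhat_mat_eq_0_if_image_eq)
    show "\<phi> ` orbit \<phi> x = orbit \<phi> x"
      using periodic by (rule image_orbit_eq_if_self_in_orbit)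
    show "orbit \<phi> x \<subseteq> {1..n}"
      using bounds that by (auto simp: N_def)
  qed (rule orbit_nonempty)
  then show ?thesis
    by (auto simp: N_def intro!: exI[of _ N])
qed

end
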